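(* Let $n=2k$ with $k\ge 2$. Then $\{a_i,c_i : i=1,\ldots,n\}\cup\{d_{i'} : i'=1,\ldots,k\}$ is a strong resolving set of $U_n$.
   Context: For $n\ge 3$, $U_n$ is the graph with vertex set $\{a_i,b_i,c_i,d_i,e_i : 1\le i\le n\}$ and edge set $\{a_ia_{i+1}, b_ib_{i+1}, e_ie_{i+1}, a_ib_i, b_ic_i, c_id_i, d_ie_i, c_{i+1}d_i : 1\le i\le n\}$, indices taken modulo $n$. $d$ is the graph distance. A vertex $w$ strongly resolves distinct vertices $u,v$ if $d(v,w)=d(v,u)+d(u,w)$ or $d(u,w)=d(u,v)+d(v,w)$. A set $S$ is a strong resolving set if every two distinct vertices are strongly resolved by some vertex of $S$. *)

theory Defs
  imports Main
begin

datatype vtx = A nat | B nat | C nat | D nat | E nat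

text \<open>Vertices of U_n; paper index i in 1..n corresponds to i-1 in 0..n-1.\<close>
fun idx :: "vtx \<Rightarrow> nat" where
  "idx (A i) = i" | "idx (B i) = i" | "idx (C i) = i" | "idx (D i) = i" | "idx (E i) = i"

definition U_verts :: "nat \<Rightarrow> vtx set" where
  "U_verts n = {v. idx v < n}"

definition U_edge0 :: "nat \<Rightarrow> vtx \<Rightarrow> vtx \<Rightarrow> bool" where
  "U_edge0 n u v \<longleftrightarrow> (\<exists>i<n.
      (u = A i \<and> v = A (Suc i mod n)) \<or>
      (u = B i \<and> v = B (Suc i mod n)) \<or>
      (u = E i \<and> v = E (Suc i mod n)) \<or>
      (u = A i \<and> v = B i) \<or>
      (u = B i \<and> v = C i) \<or>
      (u = C i \<and> v = D i) \<or>
      (u = D i \<and> v = E i) \<or>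
      (u = C (Suc i mod n) \<and> v = D i))"

definition U_adj :: "nat \<Rightarrow> vtx \<Rightarrow> vtx \<Rightarrow> bool" where
  "U_adj n u v \<longleftrightarrow> U_edge0 n u v \<or> U_edge0 n v u"

definition is_walk :: "('a \<Rightarrow> 'a \<Rightarrow> bool) \<Rightarrow> 'a list \<Rightarrow> bool" where
  "is_walk adj ps \<longleftrightarrow> ps \<noteq> [] \<and> (\<forall>j < length ps - 1. adj (ps ! j) (ps ! Suc j))"

definition gdist :: "('a \<Rightarrow> 'a \<Rightarrow> bool) \<Rightarrow> 'a \<Rightarrow> 'a \<Rightarrow> nat" where
  "gdist adj u v = (LEAST k. \<exists>ps. is_walk adj ps \<and> hd ps = u \<and> last ps = v \<and> length ps = Suc k)"

definition strongly_resolves :: "('a \<Rightarrow> 'a \<Rightarrow> bool) \<Rightarrow> 'a \<Rightarrow> 'a \<Rightarrow> 'a \<Rightarrow> bool" where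
  "strongly_resolves adj w u v \<longleftrightarrow>
     gdist adj v w = gdist adj v u + gdist adj u w \<or> gdist adj u w = gdist adj u v + gdist adj v w"

definition strong_resolving_set :: "'a set \<Rightarrow> ('a \<Rightarrow> 'a \<Rightarrow> bool) \<Rightarrow> 'a set \<Rightarrow> bool" where
  "strong_resolving_set V adj S \<longleftrightarrow> S \<subseteq> V \<and>
     (\<forall>u\<in>V. \<forall>v\<in>V. u \<noteq> v \<longrightarrow> (\<exists>w\<in>S. strongly_resolves adj w u v))"

end

theory Submission
  imports Defs
begin

text \<open>Every vertex outside the basis is some \<open>B i\<close>, some \<open>E i\<close>, or some \<open>D i\<close> with \<open>i \<ge> k\<close>.
  To resolve a pair \<open>u, v\<close> we exhibit a basis vertex \<open>w\<close> and walks \<open>v \<leadsto> u \<leadsto> w\<close> whose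
  total length equals \<open>F v - F w\<close> for a function \<open>F\<close> that changes by at most 1 along edges,
  namely the distance to \<open>w\<close>, written in closed form through the distance on the \<open>n\<close>-cycle.
  This forces \<open>u\<close> onto a geodesic from \<open>v\<close> to \<open>w\<close>. Pairs containing \<open>B i\<close> are resolved
  by \<open>A i\<close>; pairs of \<open>E\<close>'s and \<open>D\<close>'s by \<open>A i\<close> or \<open>A (i + 1)\<close>, unless their indices
  are antipodal on the cycle, where a \<open>D i\<close> with \<open>i < k\<close> takes over; two \<open>D\<close>'s with
  indices at least \<open>k\<close> are resolved by the \<open>C\<close> of the smaller index.\<close>

section \<open>Walks of given length and graph distance\<close>

inductive walk_len :: "('a \<Rightarrow> 'a \<Rightarrow> bool) \<Rightarrow> 'a \<Rightarrow> 'a \<Rightarrow> nat \<Rightarrow> bool" for adj where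
  walk_len_0: "walk_len adj u u 0"
| walk_len_Suc: "adj u v \<Longrightarrow> walk_len adj v w m \<Longrightarrow> walk_len adj u w (Suc m)"

lemma is_walk_Cons:
  assumes "ps \<noteq> []"
  shows "is_walk adj (u # ps) \<longleftrightarrow> adj u (hd ps) \<and> is_walk adj ps"
proof -
  obtain m where "length ps = Suc m" using assms by (cases ps) auto
  then show ?thesis using assms unfolding is_walk_def by (simp add: All_less_Suc2 hd_conv_nth)
qed

lemma walk_len_iff_is_walk:
  "walk_len adj u v m \<longleftrightarrow> (\<exists>ps. is_walk adj ps \<and> hd ps = u \<and> last ps = v \<and> length ps = Suc m)"
proof
  show "\<exists>ps. is_walk adj ps \<and> hd ps = u \<and> last ps = v \<and> length ps = Suc m" if "walk_len adj u v m"
    using that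
  proof (induction rule: walk_len.induct)
    case (walk_len_0 u)
    show ?case by (intro exI[of _ "[u]"]) (simp add: is_walk_def)
  next
    case (walk_len_Suc u v w m)
    then obtain ps where "is_walk adj ps" "hd ps = v" "last ps = w" "length ps = Suc m" by blast
    with walk_len_Suc.hyps(1) show ?case
      by (intro exI[of _ "u # ps"]) (auto simp add: is_walk_Cons)
  qed
next
  have "walk_len adj (hd ps) (last ps) (length ps - 1)" if "is_walk adj ps" for ps
    using that
  proof (induction ps)
    case (Cons x xs)
    show ?case
    proof (cases "xs = []")
      case True
      then show ?thesis by (simp add: walk_len_0)
    next
      case False
      with Cons.prems have "adj x (hd xs)" "is_walk adj xs" by (simp_all add: is_walk_Cons)
      with Cons.IH have "walk_len adj x (last xs) (Suc (length xs - 1))"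
        by (blast intro: walk_len_Suc)
      with False show ?thesis by simp
    qed
  qed (simp add: is_walk_def)
  then show "walk_len adj u v m" if "\<exists>ps. is_walk adj ps \<and> hd ps = u \<and> last ps = v \<and> length ps = Suc m"
    using that by fastforce
qed

lemma gdist_eq_Least: "gdist adj u v = (LEAST m. walk_len adj u v m)"
  unfolding gdist_def walk_len_iff_is_walk ..

lemma gdist_le: "walk_len adj u v m \<Longrightarrow> gdist adj u v \<le> m"
  unfolding gdist_eq_Least by (rule Least_le)

lemma walk_len_gdist: "walk_len adj u v m \<Longrightarrow> walk_len adj u v (gdist adj u v)"
  unfolding gdist_eq_Least by (rule LeastI)

lemma gdist_self [simp]: "gdist adj u u = 0"
  using gdist_le[OF walk_len_0, of adj u] by simp

lemma walk_len_trans: "walk_len adj u v a \<Longrightarrow> walk_len adj v w b \<Longrightarrow> walk_len adj u w (a + b)"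
  by (induction rule: walk_len.induct) (auto intro: walk_len_Suc)

lemma walk_len_edge: "adj u v \<Longrightarrow> walk_len adj u v 1"
  using walk_len_Suc[OF _ walk_len_0] by simp

lemma walk_len_sym:
  assumes "\<And>x y. adj x y \<Longrightarrow> adj y x" and "walk_len adj u v m"
  shows "walk_len adj v u m"
  using assms(2)
proof (induction rule: walk_len.induct)
  case (walk_len_0 u)
  show ?case by (rule walk_len.walk_len_0)
next
  case (walk_len_Suc u v w m)
  from walk_len_trans[OF walk_len_Suc.IH walk_len_edge[of adj v u, OF assms(1)[OF walk_len_Suc.hyps(1)]]]
  show ?case by simp
qed

definition edge_lipschitz :: "('a \<Rightarrow> 'a \<Rightarrow> bool) \<Rightarrow> ('a \<Rightarrow> nat) \<Rightarrow> bool" where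
  "edge_lipschitz adj F \<longleftrightarrow> (\<forall>x y. adj x y \<longrightarrow> F x \<le> F y + 1 \<and> F y \<le> F x + 1)"

lemma edge_lipschitz_walk_len:
  assumes "edge_lipschitz adj F" and "walk_len adj u v m"
  shows "F u \<le> F v + m"
  using assms(2) by induction (use assms(1) in \<open>force simp: edge_lipschitz_def\<close>)+

lemma strongly_resolves_commute: "strongly_resolves adj w u v \<longleftrightarrow> strongly_resolves adj w v u"
  unfolding strongly_resolves_def by auto

lemma strongly_resolves_left: "strongly_resolves adj u u v"
  unfolding strongly_resolves_def by simp

lemma strongly_resolves_right: "strongly_resolves adj v u v"
  unfolding strongly_resolves_def by simp

text \<open>\<open>F v - F w \<le> d(v, w) \<le> d(v, u) + d(u, w) \<le> a + b\<close>, so all these are equalities.\<close>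
lemma strongly_resolves_by_potential:
  assumes sym: "\<And>x y. adj x y \<Longrightarrow> adj y x" and F: "edge_lipschitz adj F"
    and vu: "walk_len adj v u a" and uw: "walk_len adj u w b" and drop: "F w + a + b \<le> F v"
  shows "strongly_resolves adj w u v"
proof -
  have "walk_len adj v w (gdist adj v u + gdist adj u w)"
    by (rule walk_len_trans[OF walk_len_gdist[OF vu] walk_len_gdist[OF uw]])
  then have upper: "gdist adj v w \<le> gdist adj v u + gdist adj u w"
    by (rule gdist_le)
  have "F v \<le> F w + gdist adj v w"
    by (rule edge_lipschitz_walk_len[OF F walk_len_gdist[OF walk_len_trans[OF vu uw]]])
  with upper drop gdist_le[OF vu] gdist_le[OF uw]
  have "gdist adj v w = gdist adj v u + gdist adj u w" by linarith
  then show ?thesis unfolding strongly_resolves_def ..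
qed

section \<open>Distance on the \<open>n\<close>-cycle\<close>

definition cyc_norm :: "nat \<Rightarrow> nat \<Rightarrow> nat" where
  "cyc_norm n t = min t (n - t)"

text \<open>For \<open>y < n\<close>, \<open>(x + n - y) mod n\<close> is \<open>x - y\<close> modulo \<open>n\<close>;
  adding \<open>n\<close> avoids truncated subtraction.\<close>
definition cyc_dist :: "nat \<Rightarrow> nat \<Rightarrow> nat \<Rightarrow> nat" where
  "cyc_dist n x y = cyc_norm n ((x + n - y) mod n)"

lemma cyc_norm_complement: "t \<le> n \<Longrightarrow> cyc_norm n (n - t) = cyc_norm n t"
  unfolding cyc_norm_def by (simp add: min.commute)

lemma cyc_norm_Suc_mod:
  assumes "t < n"
  shows "cyc_norm n (Suc t mod n) \<le> cyc_norm n t + 1 \<and> cyc_norm n t \<le> cyc_norm n (Suc t mod n) + 1"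
  using assms by (cases "Suc t = n") (auto simp: cyc_norm_def min_def)

lemma cyc_norm_strict_local_max:
  assumes n: "n = 2 * k" and s: "s < n" and st: "Suc s mod n = t"
    and succ: "cyc_norm n (Suc t mod n) < cyc_norm n t" and pred: "cyc_norm n s < cyc_norm n t"
  shows "t = k"
proof -
  have "t \<noteq> 0" using pred by (auto simp: cyc_norm_def)
  with s st have "Suc s \<noteq> n" by auto
  with s st have t: "t = Suc s" "t < n" by auto
  show ?thesis
  proof (cases "Suc t = n")
    case True
    then have "Suc t mod n = 0" by simp
    with succ pred t(1) True show ?thesis unfolding cyc_norm_def by (simp add: n min_def split: if_split_asm)
  next
    case False
    with t have "Suc t mod n = Suc t" by simp
    with succ pred t show ?thesis unfolding cyc_norm_def n by (simp add: min_def split: if_split_asm)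
  qed
qed

lemma rotate_mod_as_int: "y < n \<Longrightarrow> int ((x + n - y) mod n) = (int x - int y) mod int n"
proof -
  assume "y < n"
  then have "int (x + n - y) = (int x - int y) + int n" by simp
  then show ?thesis by (simp add: of_nat_mod)
qed

lemma rotate_mod_Suc_left:
  assumes "y < n" shows "(Suc x mod n + n - y) mod n = Suc ((x + n - y) mod n) mod n"
proof -
  have "int ((Suc x mod n + n - y) mod n) = (int (Suc x mod n) - int y) mod int n"
    by (rule rotate_mod_as_int[OF assms])
  also have "\<dots> = (int x + 1 - int y) mod int n"
    by (simp add: of_nat_mod add.commute mod_diff_left_eq)
  also have "\<dots> = ((int x - int y) mod int n + 1) mod int n"
    by (simp add: mod_simps algebra_simps)
  also have "\<dots> = (int ((x + n - y) mod n) + 1) mod int n"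
    by (simp only: rotate_mod_as_int[OF assms])
  also have "\<dots> = int (Suc ((x + n - y) mod n) mod n)"
    by (simp add: of_nat_mod add.commute)
  finally show ?thesis by (simp only: of_nat_eq_iff)
qed

lemma rotate_mod_Suc_Suc:
  assumes "y < n" shows "(Suc x mod n + n - Suc y mod n) mod n = (x + n - y) mod n"
proof -
  have "Suc y mod n < n" using assms by simp
  then have "int ((Suc x mod n + n - Suc y mod n) mod n)
      = (int (Suc x mod n) - int (Suc y mod n)) mod int n"
    by (rule rotate_mod_as_int)
  also have "\<dots> = (int x - int y) mod int n"
    by (simp add: of_nat_mod add.commute mod_diff_eq)
  also have "\<dots> = int ((x + n - y) mod n)"
    by (simp only: rotate_mod_as_int[OF assms])
  finally show ?thesis by (simp only: of_nat_eq_iff)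
qed

lemma rotate_mod_Suc_right:
  assumes "y < n" shows "Suc ((x + n - Suc y mod n) mod n) mod n = (x + n - y) mod n"
proof -
  have "Suc y mod n < n" using assms by simp
  have "int (Suc ((x + n - Suc y mod n) mod n) mod n)
      = (int ((x + n - Suc y mod n) mod n) + 1) mod int n"
    by (simp add: of_nat_mod add.commute)
  also have "\<dots> = ((int x - int (Suc y mod n)) mod int n + 1) mod int n"
    by (simp only: rotate_mod_as_int[OF \<open>Suc y mod n < n\<close>])
  also have "\<dots> = (int x - int y) mod int n"
    by (simp add: of_nat_mod add.commute mod_simps)
  also have "\<dots> = int ((x + n - y) mod n)"
    by (simp only: rotate_mod_as_int[OF assms])
  finally show ?thesis by (simp only: of_nat_eq_iff)
qed

lemma cyc_dist_self [simp]: "cyc_dist n x x = 0"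
  unfolding cyc_dist_def cyc_norm_def by simp

lemma cyc_dist_less: "x < y \<Longrightarrow> y < n \<Longrightarrow> cyc_dist n x y = cyc_norm n (y - x)"
proof -
  assume "x < y" "y < n"
  then have "x + n - y = n - (y - x)" "n - (y - x) < n" by simp_all
  then have "(x + n - y) mod n = n - (y - x)" by (simp only: mod_less)
  with \<open>y < n\<close> show ?thesis
    unfolding cyc_dist_def using cyc_norm_complement[of "y - x" n] by simp
qed

lemma cyc_dist_ge: "y \<le> x \<Longrightarrow> x < n \<Longrightarrow> cyc_dist n x y = cyc_norm n (x - y)"
proof -
  assume "y \<le> x" "x < n"
  then have "(x + n - y) mod n = x - y" by (simp add: mod_if)
  then show ?thesis unfolding cyc_dist_def by simp
qed

lemma cyc_dist_commute: "x < n \<Longrightarrow> y < n \<Longrightarrow> cyc_dist n x y = cyc_dist n y x"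
  by (cases x y rule: linorder_cases) (simp_all add: cyc_dist_less cyc_dist_ge)

lemma cyc_dist_Suc_left:
  assumes "x < n" "y < n"
  shows "cyc_dist n (Suc x mod n) y \<le> cyc_dist n x y + 1 \<and> cyc_dist n x y \<le> cyc_dist n (Suc x mod n) y + 1"
  unfolding cyc_dist_def rotate_mod_Suc_left[OF assms(2)]
  by (rule cyc_norm_Suc_mod) (use assms in simp)

lemma cyc_dist_Suc_right:
  assumes "x < n" "y < n"
  shows "cyc_dist n x (Suc y mod n) \<le> cyc_dist n x y + 1 \<and> cyc_dist n x y \<le> cyc_dist n x (Suc y mod n) + 1"
proof -
  have "Suc y mod n < n" using assms by simp
  with cyc_dist_Suc_left[OF assms(2,1)] assms show ?thesis
    by (simp only: cyc_dist_commute[of x n y] cyc_dist_commute[of x n "Suc y mod n"])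
qed

lemma cyc_dist_Suc_Suc: "y < n \<Longrightarrow> cyc_dist n (Suc x mod n) (Suc y mod n) = cyc_dist n x y"
  unfolding cyc_dist_def by (simp only: rotate_mod_Suc_Suc)

lemma cyc_dist_add_half: "n = 2 * k \<Longrightarrow> i < k \<Longrightarrow> cyc_dist n (i + k) i = k"
  by (simp add: cyc_dist_ge cyc_norm_def)

lemma cyc_dist_strict_local_max:
  assumes n: "n = 2 * k" and x: "x < n" and y: "y < n"
    and "cyc_dist n (Suc x mod n) y < cyc_dist n x y" and "cyc_dist n x (Suc y mod n) < cyc_dist n x y"
  shows "x = y + k \<or> y = x + k"
proof -
  have "(x + n - Suc y mod n) mod n < n" using y by simp
  from cyc_norm_strict_local_max[OF n this rotate_mod_Suc_right[OF y]] assms(4,5)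
  have "(x + n - y) mod n = k"
    unfolding cyc_dist_def rotate_mod_Suc_left[OF y] rotate_mod_Suc_right[OF y] by simp
  with n x y show ?thesis by (cases "y \<le> x") (simp_all add: mod_if split: if_splits)
qed

section \<open>The graph \<open>U_n\<close>\<close>

lemma U_adj_commute: "U_adj n x y \<Longrightarrow> U_adj n y x"
  unfolding U_adj_def by blast

lemma walk_len_U_commute: "walk_len (U_adj n) u v m \<Longrightarrow> walk_len (U_adj n) v u m"
  by (rule walk_len_sym[OF U_adj_commute])

lemma walk_len_U_edge: "U_adj n u v \<Longrightarrow> walk_len (U_adj n) u v 1"
  by (rule walk_len_edge)

lemma walk_len_U_edge_rev: "U_adj n u v \<Longrightarrow> walk_len (U_adj n) v u 1"
  by (rule walk_len_edge) (rule U_adj_commute)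

lemma strongly_resolves_U_by_potential:
  assumes "edge_lipschitz (U_adj n) F" and "walk_len (U_adj n) v u a" and "walk_len (U_adj n) u w b"
    and "F w + a + b \<le> F v"
  shows "strongly_resolves (U_adj n) w u v"
  by (rule strongly_resolves_by_potential[OF _ assms]) (rule U_adj_commute)

lemma
  assumes "i < n"
  shows U_adj_B_B: "U_adj n (B i) (B (Suc i mod n))"
    and U_adj_E_E: "U_adj n (E i) (E (Suc i mod n))"
    and U_adj_A_B: "U_adj n (A i) (B i)"
    and U_adj_B_C: "U_adj n (B i) (C i)"
    and U_adj_C_D: "U_adj n (C i) (D i)"
    and U_adj_D_E: "U_adj n (D i) (E i)"
    and U_adj_C_Suc_D: "U_adj n (C (Suc i mod n)) (D i)"
  using assms unfolding U_adj_def U_edge0_def by blast+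

definition U_edges_at :: "nat \<Rightarrow> nat \<Rightarrow> (vtx \<times> vtx) set" where
  "U_edges_at n i = {(A i, A (Suc i mod n)), (B i, B (Suc i mod n)), (E i, E (Suc i mod n)),
     (A i, B i), (B i, C i), (C i, D i), (D i, E i), (C (Suc i mod n), D i)}"

lemma edge_lipschitz_U_adjI:
  assumes "\<And>i x y. i < n \<Longrightarrow> (x, y) \<in> U_edges_at n i \<Longrightarrow> F x \<le> F y + 1 \<and> F y \<le> F x + 1"
  shows "edge_lipschitz (U_adj n) F"
proof -
  have "U_edge0 n x y \<longleftrightarrow> (\<exists>i<n. (x, y) \<in> U_edges_at n i)" for x y
    unfolding U_edge0_def U_edges_at_def by auto
  with assms show ?thesis unfolding edge_lipschitz_def U_adj_def by blast
qed

lemma walk_len_cycle: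
  assumes edge: "\<And>i. i < n \<Longrightarrow> U_adj n (X i) (X (Suc i mod n))" and "i < n" and "j < n"
  shows "walk_len (U_adj n) (X i) (X j) (cyc_dist n i j)"
proof -
  have forward: "walk_len (U_adj n) (X a) (X ((a + t) mod n)) t" if "a < n" for a t
  proof (induction t)
    case 0
    show ?case using \<open>a < n\<close> by (simp add: walk_len_0)
  next
    case (Suc t)
    have "U_adj n (X ((a + t) mod n)) (X (Suc ((a + t) mod n) mod n))"
      using edge \<open>a < n\<close> by simp
    from walk_len_trans[OF Suc.IH walk_len_U_edge[OF this]] show ?case
      by (simp add: mod_Suc_eq)
  qed
  have ordered: "walk_len (U_adj n) (X a) (X b) (cyc_dist n a b)" if "a < b" "b < n" for a b
  proof -
    have "walk_len (U_adj n) (X a) (X b) (b - a)"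
      using forward[of a "b - a"] that by simp
    moreover have "walk_len (U_adj n) (X a) (X b) (n - (b - a))"
      using walk_len_U_commute[OF forward[of b "n - (b - a)"]] that by simp
    ultimately show ?thesis
      using that by (simp add: cyc_dist_less cyc_norm_def min_def)
  qed
  show ?thesis
    using ordered[of i j] ordered[of j i] walk_len_U_commute assms(2,3)
    by (cases i j rule: linorder_cases) (auto simp: cyc_dist_commute walk_len_0)
qed

lemma walk_len_B_B: "i < n \<Longrightarrow> j < n \<Longrightarrow> walk_len (U_adj n) (B i) (B j) (cyc_dist n i j)"
  by (rule walk_len_cycle) (simp_all add: U_adj_B_B)

lemma walk_len_E_E: "i < n \<Longrightarrow> j < n \<Longrightarrow> walk_len (U_adj n) (E i) (E j) (cyc_dist n i j)"
  by (rule walk_len_cycle) (simp_all add: U_adj_E_E)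

text \<open>\<open>pot_A n m\<close>, \<open>pot_C n m\<close> and \<open>pot_D n m\<close> are the distances to \<open>A m\<close>, \<open>C m\<close> and \<open>D m\<close>
  (recall that \<open>D m\<close> is adjacent to \<open>C m\<close> and \<open>C (m + 1)\<close>).\<close>
definition pot_A :: "nat \<Rightarrow> nat \<Rightarrow> vtx \<Rightarrow> nat" where
  "pot_A n m v = (case v of
       A i \<Rightarrow> cyc_dist n i m
     | B i \<Rightarrow> 1 + cyc_dist n i m
     | C i \<Rightarrow> 2 + cyc_dist n i m
     | D i \<Rightarrow> 3 + min (cyc_dist n i m) (cyc_dist n (Suc i mod n) m)
     | E i \<Rightarrow> 4 + min (cyc_dist n i m) (cyc_dist n (Suc i mod n) m))"

definition pot_C :: "nat \<Rightarrow> nat \<Rightarrow> vtx \<Rightarrow> nat" where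
  "pot_C n m v = (case v of
       A i \<Rightarrow> 2 + cyc_dist n i m
     | B i \<Rightarrow> 1 + cyc_dist n i m
     | C i \<Rightarrow> min (2 * cyc_dist n i m) (2 + cyc_dist n i m)
     | D i \<Rightarrow> min (1 + 2 * min (cyc_dist n i m) (cyc_dist n (Suc i mod n) m))
                 (3 + min (cyc_dist n i m) (cyc_dist n (Suc i mod n) m))
     | E i \<Rightarrow> 2 + min (cyc_dist n i m) (cyc_dist n (Suc i mod n) m))"

definition pot_D :: "nat \<Rightarrow> nat \<Rightarrow> vtx \<Rightarrow> nat" where
  "pot_D n m v = (case v of
       A i \<Rightarrow> 3 + min (cyc_dist n i m) (cyc_dist n i (Suc m mod n))
     | B i \<Rightarrow> 2 + min (cyc_dist n i m) (cyc_dist n i (Suc m mod n))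
     | C i \<Rightarrow> min (1 + 2 * min (cyc_dist n i m) (cyc_dist n i (Suc m mod n)))
                 (3 + min (cyc_dist n i m) (cyc_dist n i (Suc m mod n)))
     | D i \<Rightarrow> min (2 * cyc_dist n i m) (2 + cyc_dist n i m)
     | E i \<Rightarrow> 1 + cyc_dist n i m)"

lemma edge_lipschitz_pot_A:
  assumes m: "m < n"
  shows "edge_lipschitz (U_adj n) (pot_A n m)"
proof (rule edge_lipschitz_U_adjI)
  fix i x y assume i: "i < n" and "(x, y) \<in> U_edges_at n i"
  moreover have "Suc i mod n < n" using i by simp
  ultimately show "pot_A n m x \<le> pot_A n m y + 1 \<and> pot_A n m y \<le> pot_A n m x + 1"
    using cyc_dist_Suc_left[OF i m] cyc_dist_Suc_left[OF \<open>Suc i mod n < n\<close> m]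
    by (auto simp: U_edges_at_def pot_A_def min_def)
qed

lemma edge_lipschitz_pot_C:
  assumes m: "m < n"
  shows "edge_lipschitz (U_adj n) (pot_C n m)"
proof (rule edge_lipschitz_U_adjI)
  fix i x y assume i: "i < n" and "(x, y) \<in> U_edges_at n i"
  moreover have "Suc i mod n < n" using i by simp
  ultimately show "pot_C n m x \<le> pot_C n m y + 1 \<and> pot_C n m y \<le> pot_C n m x + 1"
    using cyc_dist_Suc_left[OF i m] cyc_dist_Suc_left[OF \<open>Suc i mod n < n\<close> m]
    by (auto simp: U_edges_at_def pot_C_def min_def)
qed

lemma edge_lipschitz_pot_D:
  assumes m: "m < n"
  shows "edge_lipschitz (U_adj n) (pot_D n m)"
proof (rule edge_lipschitz_U_adjI)
  fix i x y assume i: "i < n" and "(x, y) \<in> U_edges_at n i"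
  moreover have "Suc i mod n < n" "Suc m mod n < n" using i by simp_all
  ultimately show "pot_D n m x \<le> pot_D n m y + 1 \<and> pot_D n m y \<le> pot_D n m x + 1"
    using cyc_dist_Suc_left[OF i m] cyc_dist_Suc_left[OF \<open>Suc i mod n < n\<close> m]
      cyc_dist_Suc_right[OF i m] cyc_dist_Suc_right[OF \<open>Suc i mod n < n\<close> m]
      cyc_dist_Suc_left[OF i \<open>Suc m mod n < n\<close>] cyc_dist_Suc_Suc[OF m, of i]
    by (auto simp: U_edges_at_def pot_D_def min_def)
qed

lemma walk_len_D_B:
  assumes i: "i < n" and j: "j < n"
  shows "walk_len (U_adj n) (D j) (B i) (2 + min (cyc_dist n j i) (cyc_dist n (Suc j mod n) i))"
proof -
  have j': "Suc j mod n < n" using j by simp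
  have "walk_len (U_adj n) (D j) (B i) (1 + 1 + cyc_dist n j i)"
    using walk_len_U_edge_rev[OF U_adj_C_D[OF j]] walk_len_U_edge_rev[OF U_adj_B_C[OF j]] walk_len_B_B[OF j i]
    by (blast intro: walk_len_trans)
  moreover have "walk_len (U_adj n) (D j) (B i) (1 + 1 + cyc_dist n (Suc j mod n) i)"
    using walk_len_U_edge_rev[OF U_adj_C_Suc_D[OF j]] walk_len_U_edge_rev[OF U_adj_B_C[OF j']]
      walk_len_B_B[OF j' i]
    by (blast intro: walk_len_trans)
  ultimately show ?thesis by (simp add: min_def)
qed

lemma walk_len_E_B:
  "i < n \<Longrightarrow> j < n \<Longrightarrow>
    walk_len (U_adj n) (E j) (B i) (3 + min (cyc_dist n j i) (cyc_dist n (Suc j mod n) i))"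
  using walk_len_trans[OF walk_len_U_edge_rev[OF U_adj_D_E] walk_len_D_B] by (simp add: numeral_eq_Suc)

lemma walk_len_D_A: "j < n \<Longrightarrow> walk_len (U_adj n) (D j) (A j) 3"
  using walk_len_trans[OF walk_len_D_B[of j n j] walk_len_U_edge_rev[OF U_adj_A_B]] by simp

lemma walk_len_D_A_Suc: "j < n \<Longrightarrow> walk_len (U_adj n) (D j) (A (Suc j mod n)) 3"
  using walk_len_trans[OF walk_len_D_B[of "Suc j mod n" n j] walk_len_U_edge_rev[OF U_adj_A_B]] by simp

lemma walk_len_E_D: "i < n \<Longrightarrow> j < n \<Longrightarrow> walk_len (U_adj n) (E i) (D j) (cyc_dist n i j + 1)"
  by (rule walk_len_trans[OF walk_len_E_E walk_len_U_edge_rev[OF U_adj_D_E]])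

section \<open>Strong resolution by the basis\<close>

definition U_basis :: "nat \<Rightarrow> nat \<Rightarrow> vtx set" where
  "U_basis n k = {A i | i. i < n} \<union> {C i | i. i < n} \<union> {D i | i. i < k}"

lemma A_strongly_resolves_B:
  assumes i: "i < n" and j: "j < n" and y: "y \<in> {B j, D j, E j}"
  shows "strongly_resolves (U_adj n) (A i) (B i) y"
proof (rule strongly_resolves_U_by_potential[OF edge_lipschitz_pot_A[OF i]])
  show "walk_len (U_adj n) y (B i) (pot_A n i y - 1)"
    using y walk_len_B_B[OF j i] walk_len_D_B[OF i j] walk_len_E_B[OF i j] by (auto simp: pot_A_def)
  show "walk_len (U_adj n) (B i) (A i) 1"
    by (rule walk_len_U_edge_rev[OF U_adj_A_B[OF i]])
  show "pot_A n i (A i) + (pot_A n i y - 1) + 1 \<le> pot_A n i y"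
    using y by (auto simp: pot_A_def)
qed

lemma D_strongly_resolves_E_antipodal:
  assumes n: "n = 2 * k" and i: "i < k"
  shows "strongly_resolves (U_adj n) (D i) (E i) (E (i + k))"
proof (rule strongly_resolves_U_by_potential[OF edge_lipschitz_pot_D])
  show "walk_len (U_adj n) (E (i + k)) (E i) (cyc_dist n (i + k) i)"
    using n i by (intro walk_len_E_E) simp_all
  show "walk_len (U_adj n) (E i) (D i) 1"
    using n i by (intro walk_len_U_edge_rev U_adj_D_E) simp
  show "pot_D n i (D i) + cyc_dist n (i + k) i + 1 \<le> pot_D n i (E (i + k))"
    by (simp add: pot_D_def)
qed (use n i in simp)

lemma U_basis_resolves_E_E:
  assumes n: "n = 2 * k" and i: "i < n" and j: "j < n"
  shows "\<exists>w\<in>U_basis n k. strongly_resolves (U_adj n) w (E i) (E j)"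
proof -
  have i': "Suc i mod n < n" using i by simp
  consider "cyc_dist n j i \<le> cyc_dist n (Suc j mod n) i" | "cyc_dist n j i \<le> cyc_dist n j (Suc i mod n)"
    | "j = i + k" | "i = j + k"
    using cyc_dist_strict_local_max[OF n j i] by fastforce
  then show ?thesis
  proof cases
    case 1
    have "walk_len (U_adj n) (E i) (A i) (1 + 3)"
      by (rule walk_len_trans[OF walk_len_U_edge_rev[OF U_adj_D_E[OF i]] walk_len_D_A[OF i]])
    with 1 have "strongly_resolves (U_adj n) (A i) (E i) (E j)"
      by (intro strongly_resolves_U_by_potential[OF edge_lipschitz_pot_A[OF i] walk_len_E_E[OF j i]])
        (auto simp: pot_A_def)
    moreover have "A i \<in> U_basis n k" using i by (simp add: U_basis_def)
    ultimately show ?thesis by blast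
  next
    case 2
    have "walk_len (U_adj n) (E i) (A (Suc i mod n)) (1 + 3)"
      by (rule walk_len_trans[OF walk_len_U_edge_rev[OF U_adj_D_E[OF i]] walk_len_D_A_Suc[OF i]])
    with 2 have "strongly_resolves (U_adj n) (A (Suc i mod n)) (E i) (E j)"
      by (intro strongly_resolves_U_by_potential[OF edge_lipschitz_pot_A[OF i'] walk_len_E_E[OF j i]])
        (auto simp: pot_A_def cyc_dist_Suc_Suc[OF i])
    moreover have "A (Suc i mod n) \<in> U_basis n k" using i' by (simp add: U_basis_def)
    ultimately show ?thesis by blast
  next
    case 3
    with n j have "D i \<in> U_basis n k" by (simp add: U_basis_def)
    with 3 D_strongly_resolves_E_antipodal[OF n] n j show ?thesis by auto
  next
    case 4
    with n i have "D j \<in> U_basis n k" by (simp add: U_basis_def)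
    with 4 D_strongly_resolves_E_antipodal[OF n] n i show ?thesis
      by (auto simp: strongly_resolves_commute)
  qed
qed

lemma U_basis_resolves_E_D:
  assumes n: "n = 2 * k" and k: "2 \<le> k" and i: "i < n" and j: "j < n"
  shows "\<exists>w\<in>U_basis n k. strongly_resolves (U_adj n) w (E i) (D j)"
proof -
  have j': "Suc j mod n < n" using j by simp
  consider "cyc_dist n i j \<le> cyc_dist n (Suc i mod n) j" | "cyc_dist n i j \<le> cyc_dist n i (Suc j mod n)"
    | "i = j + k" | "j = i + k"
    using cyc_dist_strict_local_max[OF n i j] by fastforce
  then show ?thesis
  proof cases
    case 1
    then have "strongly_resolves (U_adj n) (A j) (D j) (E i)"
      by (intro strongly_resolves_U_by_potential[OF edge_lipschitz_pot_A[OF j]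
            walk_len_E_D[OF i j] walk_len_D_A[OF j]])
        (auto simp: pot_A_def)
    moreover have "A j \<in> U_basis n k" using j by (simp add: U_basis_def)
    ultimately show ?thesis by (auto simp: strongly_resolves_commute)
  next
    case 2
    then have "strongly_resolves (U_adj n) (A (Suc j mod n)) (D j) (E i)"
      by (intro strongly_resolves_U_by_potential[OF edge_lipschitz_pot_A[OF j']
            walk_len_E_D[OF i j] walk_len_D_A_Suc[OF j]])
        (auto simp: pot_A_def cyc_dist_Suc_Suc[OF j])
    moreover have "A (Suc j mod n) \<in> U_basis n k" using j' by (simp add: U_basis_def)
    ultimately show ?thesis by (auto simp: strongly_resolves_commute)
  next
    case 3
    with n i have "D j \<in> U_basis n k" by (simp add: U_basis_def)
    then show ?thesis using strongly_resolves_right[of "U_adj n" "D j" "E i"] by blast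
  next
    case 4
    with n j have ik: "i < k" by simp
    have "cyc_dist n i j = k"
      using 4 cyc_dist_add_half[OF n ik] cyc_dist_commute[OF i j] by simp
    txt \<open>This is where \<open>k \<ge> 2\<close> is needed: \<open>pot_D n i (D j) = min (2 * k) (k + 2)\<close>.\<close>
    with k have "strongly_resolves (U_adj n) (D i) (E i) (D j)"
      by (intro strongly_resolves_U_by_potential[OF edge_lipschitz_pot_D[OF i]
            walk_len_U_commute[OF walk_len_E_D[OF i j]] walk_len_U_edge_rev[OF U_adj_D_E[OF i]]])
        (simp add: pot_D_def cyc_dist_commute[OF j i])
    moreover have "D i \<in> U_basis n k" using ik by (simp add: U_basis_def)
    ultimately show ?thesis by blast
  qed
qed

lemma C_strongly_resolves_D_D:
  assumes n: "n = 2 * k" and ki: "k \<le> i" and ij: "i < j" and j: "j < n"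
  shows "strongly_resolves (U_adj n) (C i) (D i) (D j)"
proof -
  have i: "i < n" using ij j by simp
  define t where "t = j - i"
  have t: "0 < t" "t < k" using ij j n ki unfolding t_def by simp_all
  have dist_j: "cyc_dist n j i = t"
    using ij j t n unfolding t_def by (simp add: cyc_dist_ge cyc_norm_def)
  have dist_Suc_j: "cyc_dist n (Suc j mod n) i = Suc t"
  proof (cases "Suc j = n")
    case True
    with i t ki have "cyc_dist n (Suc j mod n) i = cyc_norm n i" by (simp add: cyc_dist_less)
    with True n ki ij show ?thesis unfolding t_def cyc_norm_def by simp
  next
    case False
    with j ij have "cyc_dist n (Suc j mod n) i = cyc_norm n (Suc t)"
      unfolding t_def by (simp add: cyc_dist_ge Suc_diff_le)
    with t n show ?thesis unfolding cyc_norm_def by simp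
  qed
  have pot: "pot_C n i (D j) = min (1 + 2 * t) (3 + t)"
    using dist_j dist_Suc_j by (simp add: pot_C_def)
  have "walk_len (U_adj n) (D j) (D i) (if t = 1 then 2 else t + 2)"
  proof (cases "t = 1")
    case True
    then have "Suc i mod n = j" using j unfolding t_def by simp
    then have "U_adj n (C j) (D i)" using U_adj_C_Suc_D[OF i] by simp
    from walk_len_trans[OF walk_len_U_edge_rev[OF U_adj_C_D[OF j]] walk_len_U_edge[OF this]]
    show ?thesis using True by (simp add: numeral_2_eq_2)
  next
    case False
    with walk_len_trans[OF walk_len_U_edge[OF U_adj_D_E[OF j]] walk_len_E_D[OF j i]] dist_j
    show ?thesis by simp
  qed
  then show ?thesis
    using pot t by (intro strongly_resolves_U_by_potential[OF edge_lipschitz_pot_C[OF i]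
        _ walk_len_U_edge_rev[OF U_adj_C_D[OF i]]]) (auto simp: pot_C_def)
qed

lemma U_verts_diff_basis_cases:
  assumes "v \<in> U_verts n" and "v \<notin> U_basis n k"
  obtains (B) j where "j < n" "v = B j" | (E) j where "j < n" "v = E j"
    | (D) j where "k \<le> j" "j < n" "v = D j"
  using assms by (cases v) (auto simp: U_verts_def U_basis_def)

lemma U_basis_resolves_B:
  assumes i: "i < n" and y: "y \<in> U_verts n" "y \<notin> U_basis n k"
  shows "\<exists>w\<in>U_basis n k. strongly_resolves (U_adj n) w (B i) y"
proof -
  from y obtain j where "j < n" "y \<in> {B j, D j, E j}"
    by (cases rule: U_verts_diff_basis_cases) auto
  with i have "strongly_resolves (U_adj n) (A i) (B i) y" by (rule A_strongly_resolves_B)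
  moreover have "A i \<in> U_basis n k" using i by (simp add: U_basis_def)
  ultimately show ?thesis by blast
qed

lemma U_basis_resolves_D_D:
  assumes n: "n = 2 * k" and "k \<le> i" "i < n" "k \<le> j" "j < n" "i \<noteq> j"
  shows "\<exists>w\<in>U_basis n k. strongly_resolves (U_adj n) w (D i) (D j)"
proof -
  have ordered: "\<exists>w\<in>U_basis n k. strongly_resolves (U_adj n) w (D a) (D b)"
    if "k \<le> a" "a < b" "b < n" for a b
    using C_strongly_resolves_D_D[OF n that] that by (auto simp: U_basis_def)
  show ?thesis
    using ordered[of i j] ordered[of j i] assms
    by (cases "i < j") (auto simp: strongly_resolves_commute)
qed

lemma U_basis_resolves:
  assumes n: "n = 2 * k" and k: "2 \<le> k" and u: "u \<in> U_verts n" and v: "v \<in> U_verts n"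
    and uv: "u \<noteq> v"
  shows "\<exists>w\<in>U_basis n k. strongly_resolves (U_adj n) w u v"
proof -
  consider "u \<in> U_basis n k" | "v \<in> U_basis n k" | "u \<notin> U_basis n k" "v \<notin> U_basis n k" by blast
  then show ?thesis
  proof cases
    case 1
    then show ?thesis using strongly_resolves_left[of "U_adj n" u v] by blast
  next
    case 2
    then show ?thesis using strongly_resolves_right[of "U_adj n" v u] by blast
  next
    case 3
    note B_left = U_basis_resolves_B[OF _ v \<open>v \<notin> U_basis n k\<close>]
      and B_right = U_basis_resolves_B[OF _ u \<open>u \<notin> U_basis n k\<close>]
    from u \<open>u \<notin> U_basis n k\<close> show ?thesis
    proof (cases rule: U_verts_diff_basis_cases)
      case (B i)
      then show ?thesis using B_left by simp
    next
      case (E i)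
      from v \<open>v \<notin> U_basis n k\<close> show ?thesis
        by (cases rule: U_verts_diff_basis_cases)
          (use E B_right U_basis_resolves_E_E[OF n] U_basis_resolves_E_D[OF n k]
            in \<open>auto simp: strongly_resolves_commute\<close>)
    next
      case (D i)
      from v \<open>v \<notin> U_basis n k\<close> show ?thesis
        by (cases rule: U_verts_diff_basis_cases)
          (use D B_right U_basis_resolves_E_D[OF n k] U_basis_resolves_D_D[OF n] uv
            in \<open>auto simp: strongly_resolves_commute\<close>)
    qed
  qed
qed

theorem lemma4p8:
  fixes n k :: nat
  assumes "n = 2 * k" and "k \<ge> 2"
  shows "strong_resolving_set (U_verts n) (U_adj n)
           ({A i | i. i < n} \<union> {C i | i. i < n} \<union> {D i | i. i < k})"
proof -
  have "U_basis n k \<subseteq> U_verts n" using assms by (auto simp: U_basis_def U_verts_def)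
  then show ?thesis
    unfolding strong_resolving_set_def U_basis_def[symmetric]
    using U_basis_resolves[OF assms] by blast
qed

end
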